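(* For every $\sigma\in\mathrm{NC}_n$, the set $\mathrm{Red}_{\mathrm{NC}}(\sigma)$ of noncrossing reduced words of $\sigma$ is a commutation class in $\mathrm{Red}(\sigma)$; that is, $\mathrm{Red}_{\mathrm{NC}}(\sigma)\neq\emptyset$, and a word lies in $\mathrm{Red}_{\mathrm{NC}}(\sigma)$ if and only if it can be obtained from some (equivalently any) element of $\mathrm{Red}_{\mathrm{NC}}(\sigma)$ by a finite sequence of commutation moves $\mathbf a\,ij\,\mathbf b\leftrightarrow\mathbf a\,ji\,\mathbf b$ with $|i-j|>1$.
   Context: $\mathrm{Red}(\sigma)$ is the set of reduced words $(i_1,\dots,i_\ell)$, $\ell=\ell(\sigma)$, with $\sigma=s_{i_1}\cdots s_{i_\ell}$, where $s_i=(i,i+1)$. A set partition of $[n]$ is noncrossing if there are no distinct blocks $P,Q$ with $a,b\in P$, $c,d\in Q$, $a<c<b<d$; to it associate $\sigma\in S_n$ acting on each block $\{a_1<\dots<a_p\}$ by $\sigma(a_j)=a_{j-1}$ ($j\ge2$), $\sigma(a_1)=a_p$; $\mathrm{NC}_n$ is the set of these permutations. For $\sigma\in\mathrm{NC}_n$, $i$ is a noncrossing descent if $\sigma s_i\in\mathrm{NC}_n$ and $\ell(\sigma s_i)<\ell(\sigma)$. A noncrossing reduced word of $\sigma$ is a word $(i_1,\dots,i_\ell)$ with $\sigma=s_{i_1}\cdots s_{i_\ell}$ such that for every $1\le k\le\ell$, $s_{i_1}\cdots s_{i_k}\in\mathrm{NC}_n$ and $i_k$ is a noncrossing descent of $s_{i_1}\cdots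 s_{i_k}$. *)

theory Defs
  imports Main "HOL-Combinatorics.Transposition" "HOL-Library.Disjoint_Sets"
begin

text \<open>Permutations of [n] = {1..n} are functions nat => nat permuting {1..n}
  (fixing everything else). Products are function composition.\<close>

definition sref :: "nat \<Rightarrow> nat \<Rightarrow> nat" where
  "sref i = Transposition.transpose i (Suc i)"

fun word_perm :: "nat list \<Rightarrow> nat \<Rightarrow> nat" where
  "word_perm [] = id"
| "word_perm (i # w) = sref i \<circ> word_perm w"

text \<open>Coxeter length = number of inversions.\<close>
definition perm_len :: "nat \<Rightarrow> (nat \<Rightarrow> nat) \<Rightarrow> nat" where
  "perm_len n \<sigma> = card {(i, j). 1 \<le> i \<and> i < j \<and> j \<le> n \<and> \<sigma> j < \<sigma> i}"

definition Red :: "nat \<Rightarrow> (nat \<Rightarrow> nat) \<Rightarrow> nat list set" where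
  "Red n \<sigma> = {w. set w \<subseteq> {1..<n} \<and> word_perm w = \<sigma> \<and> length w = perm_len n \<sigma>}"

definition noncrossing :: "nat set set \<Rightarrow> bool" where
  "noncrossing P \<longleftrightarrow> \<not> (\<exists>B\<in>P. \<exists>C\<in>P. B \<noteq> C \<and>
      (\<exists>a b c d. a \<in> B \<and> b \<in> B \<and> c \<in> C \<and> d \<in> C \<and> a < c \<and> c < b \<and> b < d))"

definition part_perm :: "nat set set \<Rightarrow> nat \<Rightarrow> nat" where
  "part_perm P x = (if \<exists>B\<in>P. x \<in> B then
      (let B = (THE B. B \<in> P \<and> x \<in> B) in
         if x = Min B then Max B else Max {y \<in> B. y < x})
    else x)"

definition NC :: "nat \<Rightarrow> (nat \<Rightarrow> nat) set" where
  "NC n = {part_perm P | P. partition_on {1..n} P \<and> noncrossing P}"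

definition nc_descent :: "nat \<Rightarrow> (nat \<Rightarrow> nat) \<Rightarrow> nat \<Rightarrow> bool" where
  "nc_descent n \<sigma> i \<longleftrightarrow> \<sigma> \<circ> sref i \<in> NC n \<and> perm_len n (\<sigma> \<circ> sref i) < perm_len n \<sigma>"

definition RedNC :: "nat \<Rightarrow> (nat \<Rightarrow> nat) \<Rightarrow> nat list set" where
  "RedNC n \<sigma> = {w \<in> Red n \<sigma>. \<forall>k. 1 \<le> k \<and> k \<le> length w \<longrightarrow>
       word_perm (take k w) \<in> NC n \<and> nc_descent n (word_perm (take k w)) (w ! (k - 1))}"

definition comm_move :: "nat list \<Rightarrow> nat list \<Rightarrow> bool" where
  "comm_move u v \<longleftrightarrow> (\<exists>a b i j. u = a @ [i, j] @ b \<and> v = a @ [j, i] @ b \<and> (i + 1 < j \<or> j + 1 < i))"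

end

theory Submission
  imports Defs
begin

text \<open>For a noncrossing partition, \<open>i\<close> is a noncrossing descent of its permutation exactly when
  either \<open>i\<close> is the least element of a block that also contains \<open>i + 1\<close> (multiplying by \<open>s\<^sub>i\<close>
  splits off \<open>{i}\<close>), or \<open>{i}\<close> is a singleton block and the block of \<open>i + 1\<close> reaches below \<open>i\<close>
  (multiplying by \<open>s\<^sub>i\<close> merges \<open>i\<close> into it). Such positions are never adjacent, so two distinct
  noncrossing descents commute and each survives multiplication by the other. A non-identity
  noncrossing permutation always has a noncrossing descent, found in a block whose two least
  elements are closest; hence noncrossing reduced words exist. Commutation moves preserve them,
  and induction on the length, comparing the last letters of two such words, connects any two of
  them by commutation moves.\<close>

section \<open>Cyclic predecessor within a block\<close>

definition block_pred :: "nat set \<Rightarrow> nat \<Rightarrow> nat" where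
  "block_pred B x = (if x = Min B then Max B else Max {y \<in> B. y < x})"

lemma block_pred_Min: "block_pred B (Min B) = Max B"
  by (simp add: block_pred_def)

lemma block_pred_not_Min:
  assumes "finite B" "x \<in> B" "x \<noteq> Min B"
  shows "block_pred B x \<in> B" "block_pred B x < x"
    and "\<And>y. y \<in> B \<Longrightarrow> y < x \<Longrightarrow> y \<le> block_pred B x"
proof -
  have "Min B < x"
    using assms by (metis Min_le le_neq_implies_less)
  then have "Min B \<in> {y \<in> B. y < x}"
    using assms by (auto intro: Min_in)
  then have "Max {y \<in> B. y < x} \<in> {y \<in> B. y < x}"
    using assms(1) by (intro Max_in) auto
  then show "block_pred B x \<in> B" "block_pred B x < x"
    using assms(3) by (simp_all add: block_pred_def)
  show "\<And>y. y \<in> B \<Longrightarrow> y < x \<Longrightarrow> y \<le> block_pred B x"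
    using assms by (simp add: block_pred_def)
qed

lemma block_pred_in:
  assumes "finite B" "x \<in> B"
  shows "block_pred B x \<in> B"
  using assms block_pred_not_Min(1)[OF assms] Max_in[of B]
  by (cases "x = Min B") (auto simp: block_pred_Min simp del: Max_in)

lemma block_pred_eqI:
  assumes "finite B" "x \<in> B" "y \<in> B" "x < y" and "\<And>z. z \<in> B \<Longrightarrow> x < z \<Longrightarrow> y \<le> z"
  shows "block_pred B y = x"
proof -
  have "y \<noteq> Min B"
    using assms by (metis Min_le not_le)
  then have "block_pred B y = Max {z \<in> B. z < y}"
    by (simp add: block_pred_def)
  also have "\<dots> = x"
    using assms by (intro Max_eqI) (auto simp: not_less[symmetric])
  finally show ?thesis .
qed

lemma block_pred_eq_self_iff:
  assumes "finite B" "x \<in> B"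
  shows "block_pred B x = x \<longleftrightarrow> B = {x}"
proof
  assume fixed: "block_pred B x = x"
  then have "x = Min B"
    using block_pred_not_Min(2)[OF assms] by fastforce
  then have "x = Max B"
    using fixed by (simp add: block_pred_Min)
  have "y = x" if "y \<in> B" for y
    using Min_le[OF assms(1) that] Max_ge[OF assms(1) that] \<open>x = Min B\<close> \<open>x = Max B\<close> by simp
  then show "B = {x}"
    using assms(2) by blast
qed (simp add: block_pred_def)

lemma block_pred_closed_subset_eq:
  assumes "finite B" "S \<subseteq> B" "S \<noteq> {}" and closed: "\<And>y. y \<in> S \<Longrightarrow> block_pred B y \<in> S"
  shows "S = B"
proof (rule ccontr)
  assume "S \<noteq> B"
  then obtain x where x: "x \<in> B" "x \<notin> S"
    using assms(2) by auto
  have "finite S"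
    using assms finite_subset by blast
  have "Min S \<in> S"
    using \<open>finite S\<close> assms(3) by simp
  have "Min S = Min B"
  proof (rule ccontr)
    assume "Min S \<noteq> Min B"
    then have "block_pred B (Min S) < Min S"
      using block_pred_not_Min(2)[OF assms(1)] \<open>Min S \<in> S\<close> assms(2) by auto
    moreover have "block_pred B (Min S) \<in> S"
      using closed \<open>Min S \<in> S\<close> by simp
    ultimately show False
      using \<open>finite S\<close> by (metis Min_le not_le)
  qed
  then have "Max B \<in> S"
    using closed[OF \<open>Min S \<in> S\<close>] by (simp add: block_pred_Min)
  with x have "x < Max B"
    using assms(1) by (metis Max_ge le_neq_implies_less)
  define t where "t = Min {y \<in> S. x < y}"
  have "{y \<in> S. x < y} \<noteq> {}"
    using \<open>Max B \<in> S\<close> \<open>x < Max B\<close> by auto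
  then have t: "t \<in> S" "x < t" and t_least: "\<And>y. y \<in> S \<Longrightarrow> x < y \<Longrightarrow> t \<le> y"
    using Min_in[of "{y \<in> S. x < y}"] \<open>finite S\<close> by (auto simp: t_def)
  have "Min B \<le> x"
    using assms(1) x by simp
  then have "t \<noteq> Min B"
    using t by simp
  then have "x \<le> block_pred B t" "block_pred B t < t"
    using block_pred_not_Min[OF assms(1)] t x assms(2) by auto
  moreover have "block_pred B t \<in> S"
    using closed t by simp
  ultimately show False
    using x t_least by (metis le_neq_implies_less not_le)
qed

lemma block_pred_Diff_Min:
  assumes "finite B" "x \<in> B" "x \<noteq> Min B"
  shows "block_pred (B - {Min B}) x = (if x = Min (B - {Min B}) then Max B else block_pred B x)"
proof -
  let ?B' = "B - {Min B}"
  have "finite ?B'" "x \<in> ?B'"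
    using assms by auto
  have "Min B < x" "x \<le> Max B"
    using assms by (auto simp: le_neq_implies_less)
  then have "Max B \<in> ?B'"
    using assms(1,2) Max_in[of B] by fastforce
  then have "Max ?B' = Max B"
    using assms(1) by (intro Max_eqI) auto
  show ?thesis
  proof (cases "x = Min ?B'")
    case True
    then show ?thesis
      using \<open>Max ?B' = Max B\<close> by (simp add: block_pred_Min)
  next
    case False
    have "Min ?B' \<in> ?B'"
      using \<open>finite ?B'\<close> \<open>x \<in> ?B'\<close> by (intro Min_in) auto
    then have "Min B < Min ?B'"
      using assms(1) by (simp add: le_neq_implies_less)
    moreover have "Min ?B' \<le> block_pred B x"
      using block_pred_not_Min(3)[OF assms] \<open>Min ?B' \<in> ?B'\<close> False \<open>finite ?B'\<close> \<open>x \<in> ?B'\<close>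
      by (simp add: le_neq_implies_less)
    ultimately have "Max {y \<in> ?B'. y < x} = block_pred B x"
      using assms block_pred_not_Min[OF assms] by (intro Max_eqI) auto
    then show ?thesis
      using False assms(3) by (simp add: block_pred_def)
  qed
qed

lemma block_pred_insert_before:
  assumes "finite C" "i \<notin> C" "Suc i \<in> C" "block_pred C (Suc i) < i"
  shows "block_pred (insert i C) i = block_pred C (Suc i)"
    and "block_pred (insert i C) (Suc i) = i"
    and "x \<in> C \<Longrightarrow> x \<noteq> Suc i \<Longrightarrow> block_pred (insert i C) x = block_pred C x"
proof -
  let ?C' = "insert i C"
  have "finite ?C'"
    using assms(1) by simp
  have "C \<noteq> {}"
    using assms(3) by auto
  have "Suc i \<le> Max C"
    using assms(1,3) by simp
  then have "Suc i \<noteq> Min C"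
    using assms(4) by (auto simp: block_pred_Min)
  note pred_Suc = block_pred_not_Min[OF assms(1,3) this]
  have "i \<le> z" if "z \<in> C" "block_pred C (Suc i) < z" for z
    using pred_Suc(3)[OF that(1)] that(2) by (meson less_SucI not_le)
  then show "block_pred ?C' i = block_pred C (Suc i)"
    using pred_Suc assms(4) by (intro block_pred_eqI[OF \<open>finite ?C'\<close>]) auto
  show "block_pred ?C' (Suc i) = i"
    using assms(3) by (intro block_pred_eqI[OF \<open>finite ?C'\<close>]) auto
  assume x: "x \<in> C" "x \<noteq> Suc i"
  have "Min C \<le> block_pred C (Suc i)"
    using assms(1) pred_Suc(1) by simp
  then have "Min ?C' = Min C"
    using assms(1,4) \<open>C \<noteq> {}\<close> by (simp add: Min_insert)
  show "block_pred ?C' x = block_pred C x"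
  proof (cases "x = Min C")
    case True
    have "Max ?C' = Max C"
      using assms(1) \<open>C \<noteq> {}\<close> \<open>Suc i \<le> Max C\<close> by (simp add: Max_insert)
    then show ?thesis
      using block_pred_Min[of ?C'] True \<open>Min ?C' = Min C\<close> by (simp add: block_pred_Min)
  next
    case False
    note pred_x = block_pred_not_Min[OF assms(1) x(1) False]
    have "x \<le> z" if "z \<in> ?C'" "block_pred C x < z" for z
    proof (cases "z = i")
      case True
      show ?thesis
      proof (rule ccontr)
        assume "\<not> x \<le> z"
        moreover have "x \<noteq> i"
          using x(1) assms(2) by auto
        ultimately have "Suc i < x"
          using True x(2) by linarith
        then show False
          using pred_x(3)[OF assms(3)] True that(2) by simp
      qed
    next
      case False
      then show ?thesis
        using that pred_x(3) by (auto simp: not_le[symmetric])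
    qed
    then show ?thesis
      using pred_x(1,2) x by (intro block_pred_eqI[OF \<open>finite ?C'\<close>]) auto
  qed
qed

section \<open>Set partitions and their permutations\<close>

lemma partition_on_block_eq:
  assumes "partition_on A P" "B \<in> P" "C \<in> P" "x \<in> B" "x \<in> C"
  shows "B = C"
  using assms by (auto simp: partition_on_def disjoint_def)

lemma partition_on_obtain_block:
  assumes "partition_on A P" "x \<in> A"
  obtains B where "B \<in> P" "x \<in> B"
  using assms by (auto simp: partition_on_def)

lemma partition_on_finite_block:
  assumes "partition_on A P" "finite A" "B \<in> P"
  shows "finite B"
proof (rule finite_subset[OF _ assms(2)])
  show "B \<subseteq> A"
    using assms(1,3) by (auto simp: partition_on_def)
qed

lemma part_perm_block:
  assumes "partition_on A P" "B \<in> P" "x \<in> B"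
  shows "part_perm P x = block_pred B x"
proof -
  have "(THE B. B \<in> P \<and> x \<in> B) = B"
    using partition_on_block_eq[OF assms(1) _ assms(2) _ assms(3)] assms(2,3)
    by (intro the_equality) blast+
  then show ?thesis
    using assms unfolding part_perm_def block_pred_def by (auto simp: Let_def)
qed

lemma part_perm_outside:
  assumes "partition_on A P" "x \<notin> A"
  shows "part_perm P x = x"
  using assms partition_onD1 by (fastforce simp: part_perm_def)

lemma part_perm_eqI:
  assumes "partition_on A P" "\<And>x. x \<notin> A \<Longrightarrow> f x = x"
    and "\<And>B x. B \<in> P \<Longrightarrow> x \<in> B \<Longrightarrow> f x = block_pred B x"
  shows "part_perm P = f"
proof
  fix x
  show "part_perm P x = f x"
  proof (cases "x \<in> A")
    case True
    then obtain B where "B \<in> P" "x \<in> B"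
      using partition_on_obtain_block[OF assms(1)] by blast
    then show ?thesis
      using assms(1,3) by (simp add: part_perm_block)
  qed (simp add: assms(2) part_perm_outside[OF assms(1)])
qed

lemma part_perm_in_block:
  assumes "partition_on A P" "finite A" "B \<in> P" "x \<in> B"
  shows "part_perm P x \<in> B"
  using part_perm_block[OF assms(1,3,4)]
    block_pred_in[OF partition_on_finite_block[OF assms(1-3)] assms(4)] by simp

lemma part_perm_Suc_same_block:
  assumes "partition_on A P" "finite A" "B \<in> P" "i \<in> B" "Suc i \<in> B"
  shows "part_perm P (Suc i) = i"
  using assms by (simp add: part_perm_block block_pred_eqI partition_on_finite_block)

lemma partition_on_replace_block:
  assumes "partition_on A P" "B \<in> P" "partition_on B Q"
  shows "partition_on A (Q \<union> (P - {B}))"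
proof (rule partition_onI)
  show "\<Union>(Q \<union> (P - {B})) = A"
    using partition_onD1[OF assms(1)] partition_onD1[OF assms(3)] assms(2) by auto
  show "{} \<notin> Q \<union> (P - {B})"
    using partition_onD3[OF assms(1)] partition_onD3[OF assms(3)] by blast
  have disj_P: "disjnt p q" if "p \<in> P" "q \<in> P" "p \<noteq> q" for p q
    using pairwiseD[OF partition_onD2[OF assms(1)]] that .
  have disj_Q: "disjnt p q" if "p \<in> Q" "q \<in> Q" "p \<noteq> q" for p q
    using pairwiseD[OF partition_onD2[OF assms(3)]] that .
  have disj_QP: "disjnt p q" if "p \<in> Q" "q \<in> P - {B}" for p q
  proof (rule disjnt_subset1)
    show "disjnt B q"
      using disj_P[of B q] assms(2) that(2) by blast
    show "p \<subseteq> B"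
      using partition_onD1[OF assms(3)] that(1) by blast
  qed
  fix p q
  assume "p \<in> Q \<union> (P - {B})" "q \<in> Q \<union> (P - {B})" "p \<noteq> q"
  then consider "p \<in> Q" "q \<in> Q" | "p \<in> Q" "q \<in> P - {B}" | "q \<in> Q" "p \<in> P - {B}"
    | "p \<in> P - {B}" "q \<in> P - {B}"
    by blast
  then show "disjnt p q"
    using disj_P disj_Q disj_QP disjnt_sym \<open>p \<noteq> q\<close> by cases blast+
qed

lemma partition_on_merge_blocks:
  assumes "partition_on A P" "B \<in> P" "C \<in> P"
  shows "partition_on A (insert (B \<union> C) (P - {B, C}))"
proof (rule partition_onI)
  show "\<Union>(insert (B \<union> C) (P - {B, C})) = A"
    using partition_onD1[OF assms(1)] assms(2,3) by auto
  show "{} \<notin> insert (B \<union> C) (P - {B, C})"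
    using partition_onD3[OF assms(1)] assms(2) by auto
  have disj_P: "disjnt p q" if "p \<in> P" "q \<in> P" "p \<noteq> q" for p q
    using pairwiseD[OF partition_onD2[OF assms(1)]] that .
  have merged: "disjnt (B \<union> C) q" if "q \<in> P - {B, C}" for q
    using disj_P[of B q] disj_P[of C q] assms(2,3) that by (fastforce simp: disjnt_Un1)
  fix p q
  assume "p \<in> insert (B \<union> C) (P - {B, C})" "q \<in> insert (B \<union> C) (P - {B, C})" "p \<noteq> q"
  then consider "p = B \<union> C" "q \<in> P - {B, C}" | "q = B \<union> C" "p \<in> P - {B, C}"
    | "p \<in> P - {B, C}" "q \<in> P - {B, C}"
    by blast
  then show "disjnt p q"
    using merged disj_P disjnt_sym \<open>p \<noteq> q\<close> by cases blast+
qed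

section \<open>Noncrossing partitions\<close>

lemma noncrossingD:
  assumes "noncrossing P" "B \<in> P" "C \<in> P" "B \<noteq> C"
    and "a \<in> B" "b \<in> B" "c \<in> C" "d \<in> C" "a < c" "c < b" "b < d"
  shows False
proof -
  have "\<exists>B\<in>P. \<exists>C\<in>P. B \<noteq> C \<and> (\<exists>a b c d. a \<in> B \<and> b \<in> B \<and> c \<in> C \<and> d \<in> C \<and> a < c \<and> c < b \<and> b < d)"
    using assms(2-) by (intro bexI[of _ B] bexI[of _ C] conjI exI) assumption+
  with assms(1) show False
    unfolding noncrossing_def by (rule notE)
qed

lemma noncrossingI:
  assumes "\<And>B C a b c d. B \<in> P \<Longrightarrow> C \<in> P \<Longrightarrow> B \<noteq> C \<Longrightarrow> a \<in> B \<Longrightarrow> b \<in> B \<Longrightarrow> c \<in> C \<Longrightarrow> d \<in> C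
      \<Longrightarrow> a < c \<Longrightarrow> c < b \<Longrightarrow> b < d \<Longrightarrow> False"
  shows "noncrossing P"
  unfolding noncrossing_def
proof (rule notI, elim bexE exE conjE)
  fix B C a b c d
  assume "B \<in> P" "C \<in> P" "B \<noteq> C" "a \<in> B" "b \<in> B" "c \<in> C" "d \<in> C" "a < c" "c < b" "b < d"
  then show False
    by (rule assms)
qed

lemma noncrossing_insert_singleton:
  assumes "noncrossing Q"
  shows "noncrossing (insert {x} Q)"
proof (rule noncrossingI)
  fix X Y a b c d
  assume XY: "X \<in> insert {x} Q" "Y \<in> insert {x} Q" "X \<noteq> Y"
    and abcd: "a \<in> X" "b \<in> X" "c \<in> Y" "d \<in> Y" "a < c" "c < b" "b < d"
  then have "X \<in> Q" "Y \<in> Q"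
    by auto
  then show False
    using noncrossingD[OF assms _ _ XY(3) abcd] by blast
qed

lemma noncrossing_lift:
  assumes "noncrossing P" and into: "\<And>X. X \<in> Q \<Longrightarrow> F X \<in> P \<and> g ` X \<subseteq> F X" and "inj_on F Q"
    and mono: "\<And>X Y x y. X \<in> Q \<Longrightarrow> Y \<in> Q \<Longrightarrow> X \<noteq> Y \<Longrightarrow> x \<in> X \<Longrightarrow> y \<in> Y \<Longrightarrow> x < y \<Longrightarrow> g x < g y"
  shows "noncrossing Q"
proof (rule noncrossingI)
  fix X Y a b c d
  assume XY: "X \<in> Q" "Y \<in> Q" "X \<noteq> Y"
    and abcd: "a \<in> X" "b \<in> X" "c \<in> Y" "d \<in> Y" "a < c" "c < b" "b < d"
  have "F X \<noteq> F Y"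
    using inj_onD[OF \<open>inj_on F Q\<close> _ XY(1,2)] XY(3) by blast
  moreover have "F X \<in> P" "F Y \<in> P"
    using into XY(1,2) by blast+
  moreover have "g a \<in> F X" "g b \<in> F X" "g c \<in> F Y" "g d \<in> F Y"
    using into XY(1,2) abcd(1-4) by blast+
  moreover have "g a < g c" "g c < g b" "g b < g d"
    using mono[OF XY abcd(1,3,5)] mono[OF XY(2,1) XY(3)[symmetric] abcd(3,2,6)]
      mono[OF XY abcd(2,4,7)] .
  ultimately show False
    using noncrossingD[OF assms(1)] by metis
qed

lemma noncrossing_nested:
  assumes "noncrossing P" "B \<in> P" "D \<in> P" "disjnt B D"
    and "m \<in> B" "t \<in> B" "x \<in> D" "m < x" "x < t" "z \<in> D"
  shows "m < z \<and> z < t"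
proof -
  have "B \<noteq> D" "z \<noteq> m" "z \<noteq> t"
    using assms(4-7,10) by (auto simp: disjnt_def)
  moreover have "\<not> z < m"
    using noncrossingD[OF assms(1,3,2) _ assms(10,7,5,6)] \<open>B \<noteq> D\<close> assms(8,9) by auto
  moreover have "\<not> t < z"
    using noncrossingD[OF assms(1,2,3) \<open>B \<noteq> D\<close> assms(5,6,7,10)] assms(8,9) by auto
  ultimately show ?thesis
    by linarith
qed

lemma NC_obtain_partition:
  assumes "\<sigma> \<in> NC n"
  obtains P where "partition_on {1..n} P" "noncrossing P" "\<sigma> = part_perm P"
  using assms unfolding NC_def by blast

lemma NC_intro:
  assumes "partition_on {1..n} P" "noncrossing P" "part_perm P = \<sigma>"
  shows "\<sigma> \<in> NC n"
  unfolding NC_def using assms by (intro CollectI exI[of _ P]) simp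

section \<open>Simple transpositions and inversions\<close>

lemma sref_apply [simp]:
  "sref i i = Suc i" "sref i (Suc i) = i" "x \<noteq> i \<Longrightarrow> x \<noteq> Suc i \<Longrightarrow> sref i x = x"
  by (simp_all add: sref_def)

lemma comp_sref_sref [simp]: "f \<circ> sref i \<circ> sref i = f"
  by (simp add: sref_def comp_assoc)

lemma perm_len_comp_sref:
  assumes "1 \<le> i" "Suc i \<le> n" "\<sigma> (Suc i) < \<sigma> i"
  shows "perm_len n (\<sigma> \<circ> sref i) + 1 = perm_len n \<sigma>"
proof -
  define inv where "inv \<tau> = {(p, q). 1 \<le> p \<and> p < q \<and> q \<le> n \<and> \<tau> q < \<tau> p}" for \<tau> :: "nat \<Rightarrow> nat"
  define swap where "swap = map_prod (sref i) (sref i)"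
  have swap_swap: "swap (swap x) = x" for x
    by (cases x) (simp add: swap_def sref_def)
  have swap_inv: "swap x \<in> inv (\<sigma> \<circ> sref i) \<longleftrightarrow> x \<in> inv \<sigma> - {(i, Suc i)}" for x
    using assms by (cases x) (auto simp: swap_def inv_def sref_def transpose_def)
  have swap_inv': "swap y \<in> inv \<sigma> - {(i, Suc i)} \<longleftrightarrow> y \<in> inv (\<sigma> \<circ> sref i)" for y
    using swap_inv[of "swap y"] by (simp add: swap_swap)
  have "bij_betw swap (inv \<sigma> - {(i, Suc i)}) (inv (\<sigma> \<circ> sref i))"
    by (rule bij_betw_byWitness[where f' = swap])
      (simp_all add: swap_swap swap_inv image_subset_iff, use swap_inv' in blast)
  then have "card (inv (\<sigma> \<circ> sref i)) = card (inv \<sigma> - {(i, Suc i)})"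
    by (simp add: bij_betw_same_card)
  moreover have "finite (inv \<sigma>)"
    by (rule finite_subset[of _ "{1..n} \<times> {1..n}"]) (auto simp: inv_def)
  moreover have "(i, Suc i) \<in> inv \<sigma>"
    using assms by (simp add: inv_def)
  ultimately show ?thesis
    unfolding perm_len_def inv_def[symmetric]
    by (metis Suc_eq_plus1 card_Diff1_less card_Suc_Diff1)
qed

section \<open>Splitting off and merging in a singleton block\<close>

lemma part_perm_comp_sref_outside:
  assumes "partition_on A P" "x \<notin> A" "i \<in> A" "Suc i \<in> A"
  shows "(part_perm P \<circ> sref i) x = x"
proof -
  have "x \<noteq> i" "x \<noteq> Suc i"
    using assms(2-4) by auto
  then show ?thesis
    using part_perm_outside[OF assms(1,2)] by simp
qed

lemma partition_on_split_singleton: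
  assumes "partition_on A P" "B \<in> P" "x \<in> B" "B \<noteq> {x}"
  shows "partition_on A (insert {x} (insert (B - {x}) (P - {B})))"
proof -
  have "partition_on B {{x}, B - {x}}"
    using assms(3,4) by (auto simp: partition_on_def disjoint_def)
  from partition_on_replace_block[OF assms(1,2) this]
  show ?thesis
    by simp
qed

lemma noncrossing_split_singleton:
  assumes "noncrossing P" "B \<in> P"
  shows "noncrossing (insert {x} (insert (B - {x}) (P - {B})))"
proof (rule noncrossing_insert_singleton)
  show "noncrossing (insert (B - {x}) (P - {B}))"
    by (rule noncrossing_lift[OF assms(1), where F = "\<lambda>X. if X = B - {x} then B else X" and g = id])
      (use assms(2) in \<open>auto simp: inj_on_def\<close>)
qed

lemma part_perm_split_Min:
  assumes P: "partition_on A P" "finite A" and B: "B \<in> P" "Suc i \<in> B" "i = Min B"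
  shows "part_perm (insert {i} (insert (B - {i}) (P - {B}))) = part_perm P \<circ> sref i"
proof -
  let ?P' = "insert {i} (insert (B - {i}) (P - {B}))"
  have "finite B"
    using partition_on_finite_block[OF P B(1)] .
  then have "i \<in> B"
    using B(2,3) by (auto intro: Min_in)
  have "Suc i = Min (B - {i})"
    using \<open>finite B\<close> B(2,3) by (intro Min_eqI[symmetric]) (auto simp: Suc_le_eq le_neq_implies_less)
  have "B \<noteq> {i}"
    using B(2) by auto
  then have P': "partition_on A ?P'"
    by (rule partition_on_split_singleton[OF P(1) B(1) \<open>i \<in> B\<close>])
  show ?thesis
  proof (rule part_perm_eqI[OF P'])
    fix x
    assume "x \<notin> A"
    moreover have "i \<in> A" "Suc i \<in> A"
      using P(1) B(1,2) \<open>i \<in> B\<close> by (auto simp: partition_on_def)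
    ultimately show "(part_perm P \<circ> sref i) x = x"
      by (rule part_perm_comp_sref_outside[OF P(1)])
  next
    fix D x
    assume "D \<in> ?P'" "x \<in> D"
    then consider "D = {i}" "x = i" | "D = B - {i}" "x = Suc i"
      | "D = B - {i}" "x \<in> B" "x \<noteq> i" "x \<noteq> Suc i" | "D \<in> P" "D \<noteq> B"
      by auto
    then show "(part_perm P \<circ> sref i) x = block_pred D x"
    proof cases
      case 1
      then show ?thesis
        using part_perm_Suc_same_block[OF P B(1) \<open>i \<in> B\<close> B(2)] by (simp add: block_pred_def)
    next
      case 2
      have "part_perm P i = Max B"
        using part_perm_block[OF P(1) B(1) \<open>i \<in> B\<close>] block_pred_Min[of B, folded B(3)] by simp
      then show ?thesis
        using 2 block_pred_Diff_Min[OF \<open>finite B\<close> B(2), folded B(3)]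
          \<open>Suc i = Min (B - {i})\<close>[symmetric] by simp
    next
      case 3
      then show ?thesis
        using part_perm_block[OF P(1) B(1) 3(2)]
          block_pred_Diff_Min[OF \<open>finite B\<close> 3(2), folded B(3)] \<open>Suc i = Min (B - {i})\<close>[symmetric]
        by simp
    next
      case 4
      then have "x \<notin> B"
        using partition_on_block_eq[OF P(1) 4(1) B(1) \<open>x \<in> D\<close>] by blast
      then have "x \<noteq> i" "x \<noteq> Suc i"
        using \<open>i \<in> B\<close> B(2) by auto
      then show ?thesis
        using part_perm_block[OF P(1) 4(1) \<open>x \<in> D\<close>] by simp
    qed
  qed
qed

lemma NC_comp_sref_split:
  assumes "\<sigma> \<in> NC n" "1 \<le> i" "Suc i \<le> n" "\<sigma> (Suc i) = i" "i < \<sigma> i"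
  shows "\<sigma> \<circ> sref i \<in> NC n"
proof -
  obtain P where P: "partition_on {1..n} P" "noncrossing P" "\<sigma> = part_perm P"
    using NC_obtain_partition[OF assms(1)] .
  obtain B where B: "B \<in> P" "Suc i \<in> B"
    using partition_on_obtain_block[OF P(1), of "Suc i"] assms(2,3) by auto
  have "finite B"
    using partition_on_finite_block[OF P(1) _ B(1)] by simp
  have "i \<in> B"
    using part_perm_in_block[OF P(1) _ B] P(3) assms(4) by simp
  have "i = Min B"
  proof (rule ccontr)
    assume "i \<noteq> Min B"
    then have "block_pred B i < i"
      using block_pred_not_Min(2)[OF \<open>finite B\<close> \<open>i \<in> B\<close>] by simp
    then show False
      using part_perm_block[OF P(1) B(1) \<open>i \<in> B\<close>] P(3) assms(5) by simp
  qed
  have "B \<noteq> {i}"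
    using B(2) by auto
  show ?thesis
    using partition_on_split_singleton[OF P(1) B(1) \<open>i \<in> B\<close> \<open>B \<noteq> {i}\<close>]
      noncrossing_split_singleton[OF P(2) B(1)] part_perm_split_Min[OF P(1) _ B \<open>i = Min B\<close>] P(3)
    by (intro NC_intro) auto
qed

lemma noncrossing_merge_singleton:
  assumes P: "partition_on A P" "noncrossing P" and "{i} \<in> P" "C \<in> P" "Suc i \<in> C"
  shows "noncrossing (insert (insert i C) (P - {{i}, C}))"
proof -
  let ?C' = "insert i C"
  let ?P' = "insert ?C' (P - {{i}, C})"
  have P': "partition_on A ?P'"
    using partition_on_merge_blocks[OF P(1) assms(3,4)] by simp
  have "i \<notin> C"
    using partition_on_block_eq[OF P(1) assms(3,4), of i] assms(5) by auto
  have other: "x \<noteq> i" "x \<noteq> Suc i" if "D \<in> P - {{i}, C}" "x \<in> D" for D x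
    using that partition_on_block_eq[OF P(1) _ assms(3)] partition_on_block_eq[OF P(1) _ assms(4)]
      assms(5) by blast+
  show ?thesis
  proof (rule noncrossing_lift[OF P(2), where F = "\<lambda>X. if X = ?C' then C else X"
        and g = "\<lambda>z. if z = i then Suc i else z"])
    show "inj_on (\<lambda>X. if X = ?C' then C else X) ?P'"
      by (auto simp: inj_on_def)
    fix X
    assume "X \<in> ?P'"
    then show "(if X = ?C' then C else X) \<in> P \<and>
        (\<lambda>z. if z = i then Suc i else z) ` X \<subseteq> (if X = ?C' then C else X)"
      using assms(4,5) other \<open>i \<notin> C\<close> by auto
  next
    fix X Y x y
    assume XY: "X \<in> ?P'" "Y \<in> ?P'" "X \<noteq> Y" "x \<in> X" "y \<in> Y" "x < y"
    have "?C' \<in> ?P'"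
      by simp
    then have "\<not> (x = i \<and> y = Suc i)"
      using partition_on_block_eq[OF P' XY(1) \<open>?C' \<in> ?P'\<close> XY(4)]
        partition_on_block_eq[OF P' XY(2) \<open>?C' \<in> ?P'\<close> XY(5)] XY(3) assms(5)
      by auto
    then show "(if x = i then Suc i else x) < (if y = i then Suc i else y)"
      using XY(6) by auto
  qed
qed

lemma part_perm_merge_singleton:
  assumes P: "partition_on A P" "finite A" and "{i} \<in> P" "C \<in> P" "Suc i \<in> C"
    and pred: "block_pred C (Suc i) < i"
  shows "part_perm (insert (insert i C) (P - {{i}, C})) = part_perm P \<circ> sref i"
proof -
  let ?P' = "insert (insert i C) (P - {{i}, C})"
  have P': "partition_on A ?P'"
    using partition_on_merge_blocks[OF P(1) assms(3,4)] by simp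
  have "finite C"
    using partition_on_finite_block[OF P assms(4)] .
  have "i \<notin> C"
    using partition_on_block_eq[OF P(1) assms(3,4), of i] assms(5) by auto
  note pred_insert = block_pred_insert_before[OF \<open>finite C\<close> \<open>i \<notin> C\<close> assms(5) pred]
  show ?thesis
  proof (rule part_perm_eqI[OF P'])
    fix x
    assume "x \<notin> A"
    moreover have "i \<in> A" "Suc i \<in> A"
      using P(1) assms(3-5) by (auto simp: partition_on_def)
    ultimately show "(part_perm P \<circ> sref i) x = x"
      by (rule part_perm_comp_sref_outside[OF P(1)])
  next
    fix D x
    assume "D \<in> ?P'" "x \<in> D"
    then consider "D = insert i C" "x = i" | "D = insert i C" "x = Suc i"
      | "D = insert i C" "x \<in> C" "x \<noteq> i" "x \<noteq> Suc i" | "D \<in> P - {{i}, C}"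
      by auto
    then show "(part_perm P \<circ> sref i) x = block_pred D x"
    proof cases
      case 1
      then show ?thesis
        using part_perm_block[OF P(1) assms(4,5)] pred_insert(1) by simp
    next
      case 2
      then show ?thesis
        using part_perm_block[OF P(1) assms(3), of i] pred_insert(2) by (simp add: block_pred_def)
    next
      case 3
      then show ?thesis
        using part_perm_block[OF P(1) assms(4) 3(2)] pred_insert(3)[OF 3(2,4)] by simp
    next
      case 4
      then have "x \<noteq> i" "x \<noteq> Suc i"
        using partition_on_block_eq[OF P(1) _ assms(3)] partition_on_block_eq[OF P(1) _ assms(4)]
          \<open>x \<in> D\<close> assms(5) by blast+
      then show ?thesis
        using 4 part_perm_block[OF P(1) _ \<open>x \<in> D\<close>] by simp
    qed
  qed
qed

lemma NC_comp_sref_merge: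
  assumes "\<sigma> \<in> NC n" "1 \<le> i" "Suc i \<le> n" "\<sigma> i = i" "\<sigma> (Suc i) < i"
  shows "\<sigma> \<circ> sref i \<in> NC n"
proof -
  obtain P where P: "partition_on {1..n} P" "noncrossing P" "\<sigma> = part_perm P"
    using NC_obtain_partition[OF assms(1)] .
  obtain B where B: "B \<in> P" "i \<in> B"
    using partition_on_obtain_block[OF P(1), of i] assms(2,3) by auto
  obtain C where C: "C \<in> P" "Suc i \<in> C"
    using partition_on_obtain_block[OF P(1), of "Suc i"] assms(2,3) by auto
  have "B = {i}"
    using block_pred_eq_self_iff[OF partition_on_finite_block[OF P(1) _ B(1)] B(2)]
      part_perm_block[OF P(1) B] P(3) assms(4) by simp
  have "block_pred C (Suc i) < i"
    using part_perm_block[OF P(1) C] P(3) assms(5) by simp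
  then show ?thesis
    using partition_on_merge_blocks[OF P(1) B(1) C(1)] noncrossing_merge_singleton[OF P(1,2) _ C]
      part_perm_merge_singleton[OF P(1) _ _ C] B(1) P(3) \<open>B = {i}\<close>
    by (intro NC_intro) auto
qed

section \<open>Noncrossing descents\<close>

lemma NC_apply_Suc_neq:
  assumes "\<sigma> \<in> NC n" "1 \<le> i" "Suc i \<le> n"
  shows "\<sigma> (Suc i) \<noteq> \<sigma> i"
proof
  assume eq: "\<sigma> (Suc i) = \<sigma> i"
  obtain P where P: "partition_on {1..n} P" "noncrossing P" "\<sigma> = part_perm P"
    using NC_obtain_partition[OF assms(1)] .
  obtain B where B: "B \<in> P" "i \<in> B"
    using partition_on_obtain_block[OF P(1), of i] assms(2,3) by auto
  obtain C where C: "C \<in> P" "Suc i \<in> C"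
    using partition_on_obtain_block[OF P(1), of "Suc i"] assms(2,3) by auto
  have "\<sigma> i \<in> B" "\<sigma> (Suc i) \<in> C"
    using part_perm_in_block[OF P(1) _ B] part_perm_in_block[OF P(1) _ C] P(3) by auto
  then have "B = C"
    using partition_on_block_eq[OF P(1) B(1) C(1)] eq by simp
  then have "\<sigma> i = i"
    using part_perm_Suc_same_block[OF P(1) _ B] C(2) P(3) eq by simp
  then have "B = {i}"
    using block_pred_eq_self_iff[OF partition_on_finite_block[OF P(1) _ B(1)] B(2)]
      part_perm_block[OF P(1) B] P(3) by simp
  then show False
    using C(2) \<open>B = C\<close> by simp
qed

lemma nc_descent_imp_less:
  assumes "\<sigma> \<in> NC n" "1 \<le> i" "Suc i \<le> n" "nc_descent n \<sigma> i"
  shows "\<sigma> (Suc i) < \<sigma> i"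
proof (rule ccontr)
  assume "\<not> \<sigma> (Suc i) < \<sigma> i"
  then have "(\<sigma> \<circ> sref i) (Suc i) < (\<sigma> \<circ> sref i) i"
    using NC_apply_Suc_neq[OF assms(1-3)] by simp
  from perm_len_comp_sref[OF assms(2,3) this, unfolded comp_sref_sref]
  have "perm_len n \<sigma> + 1 = perm_len n (\<sigma> \<circ> sref i)" .
  then show False
    using assms(4) unfolding nc_descent_def by linarith
qed

text \<open>Multiplying by the transposition of \<open>i\<close> and \<open>Suc i\<close> from the right joins the cycle of \<open>i\<close>
  to the cycle of \<open>Suc i\<close> when they are different.\<close>

lemma part_perm_comp_sref_absorbs:
  assumes P: "partition_on A P" "finite A" and P': "partition_on A P'"
    and comp: "part_perm P' = part_perm P \<circ> sref i"
    and B: "B \<in> P" "i \<in> B" "Suc i \<notin> B" and C': "C' \<in> P'" "Suc i \<in> C'"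
  shows "B \<subseteq> C'"
proof -
  have "finite B"
    using partition_on_finite_block[OF P B(1)] .
  have pred_i: "block_pred B i \<in> B \<inter> C'"
  proof -
    have "part_perm P' (Suc i) \<in> C'"
      using part_perm_in_block[OF P' P(2) C'] .
    then show ?thesis
      using comp part_perm_block[OF P(1) B(1,2)] block_pred_in[OF \<open>finite B\<close> B(2)] by simp
  qed
  have closed: "block_pred B y \<in> B \<inter> C'" if "y \<in> B \<inter> C'" for y
  proof (cases "y = i")
    case False
    have "y \<noteq> Suc i"
      using that B(3) by auto
    then have "part_perm P' y = part_perm P y"
      using False comp by simp
    moreover have "part_perm P' y \<in> C'"
      using part_perm_in_block[OF P' P(2) C'(1)] that by simp
    ultimately show ?thesis
      using that part_perm_block[OF P(1) B(1)] block_pred_in[OF \<open>finite B\<close>] by simp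
  qed (use pred_i in simp)
  have "B \<inter> C' = B"
    using closed pred_i by (intro block_pred_closed_subset_eq[OF \<open>finite B\<close>]) auto
  then show ?thesis
    by blast
qed

text \<open>In terms of blocks: \<open>i\<close> is the minimum of a block containing \<open>Suc i\<close>, or \<open>{i}\<close> is a
  block and the block of \<open>Suc i\<close> reaches below \<open>i\<close>.\<close>

definition nc_descent_pattern :: "(nat \<Rightarrow> nat) \<Rightarrow> nat \<Rightarrow> bool" where
  "nc_descent_pattern \<sigma> i \<longleftrightarrow> (\<sigma> (Suc i) = i \<and> i < \<sigma> i) \<or> (\<sigma> i = i \<and> \<sigma> (Suc i) < i)"

lemma nc_descent_pattern_less: "nc_descent_pattern \<sigma> i \<Longrightarrow> \<sigma> (Suc i) < \<sigma> i"
  by (auto simp: nc_descent_pattern_def)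

lemma perm_len_comp_sref_pattern:
  "1 \<le> i \<Longrightarrow> Suc i \<le> n \<Longrightarrow> nc_descent_pattern \<sigma> i \<Longrightarrow> perm_len n (\<sigma> \<circ> sref i) + 1 = perm_len n \<sigma>"
  by (rule perm_len_comp_sref[OF _ _ nc_descent_pattern_less])

lemma nc_descent_imp_pattern:
  assumes "\<sigma> \<in> NC n" "1 \<le> i" "Suc i \<le> n" "nc_descent n \<sigma> i"
  shows "nc_descent_pattern \<sigma> i"
proof -
  have less: "\<sigma> (Suc i) < \<sigma> i"
    using nc_descent_imp_less[OF assms] .
  obtain P where P: "partition_on {1..n} P" "noncrossing P" "\<sigma> = part_perm P"
    using NC_obtain_partition[OF assms(1)] .
  obtain B where B: "B \<in> P" "i \<in> B"
    using partition_on_obtain_block[OF P(1), of i] assms(2,3) by auto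
  consider "Suc i \<in> B" | "\<sigma> i = i" | "Suc i \<notin> B" "\<sigma> i \<noteq> i"
    by blast
  then show ?thesis
  proof cases
    case 1
    then have "\<sigma> (Suc i) = i"
      using part_perm_Suc_same_block[OF P(1) _ B] P(3) by simp
    then show ?thesis
      using less by (simp add: nc_descent_pattern_def)
  next
    case 2
    then show ?thesis
      using less by (simp add: nc_descent_pattern_def)
  next
    case 3
    obtain P' where P': "partition_on {1..n} P'" "noncrossing P'" "\<sigma> \<circ> sref i = part_perm P'"
      using NC_obtain_partition[of "\<sigma> \<circ> sref i" n] assms(4) by (auto simp: nc_descent_def)
    obtain C' where C': "C' \<in> P'" "Suc i \<in> C'"
      using partition_on_obtain_block[OF P'(1), of "Suc i"] assms(2,3) by auto
    have "i \<in> C'"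
      using part_perm_comp_sref_absorbs[OF P(1) _ P'(1) _ B 3(1) C'] P(3) P'(3) B(2) by auto
    then have "(\<sigma> \<circ> sref i) (Suc i) = i"
      using part_perm_Suc_same_block[OF P'(1) _ C'(1)] C'(2) P'(3) by simp
    then show ?thesis
      using 3(2) by simp
  qed
qed

lemma nc_descent_iff_pattern:
  assumes "\<sigma> \<in> NC n" "1 \<le> i" "Suc i \<le> n"
  shows "nc_descent n \<sigma> i \<longleftrightarrow> nc_descent_pattern \<sigma> i"
proof
  assume "nc_descent_pattern \<sigma> i"
  then have "\<sigma> \<circ> sref i \<in> NC n"
    using NC_comp_sref_split[OF assms] NC_comp_sref_merge[OF assms]
    by (auto simp: nc_descent_pattern_def)
  moreover have "perm_len n (\<sigma> \<circ> sref i) + 1 = perm_len n \<sigma>"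
    using perm_len_comp_sref_pattern[OF assms(2,3) \<open>nc_descent_pattern \<sigma> i\<close>] .
  ultimately show "nc_descent n \<sigma> i"
    by (simp add: nc_descent_def)
qed (rule nc_descent_imp_pattern[OF assms])

lemma NC_comp_sref:
  assumes "\<sigma> \<in> NC n" "1 \<le> i" "Suc i \<le> n" "nc_descent_pattern \<sigma> i"
  shows "\<sigma> \<circ> sref i \<in> NC n"
  using nc_descent_iff_pattern[OF assms(1-3)] assms(4) by (simp add: nc_descent_def)

lemma nc_descent_pattern_far:
  assumes "nc_descent_pattern \<sigma> i" "nc_descent_pattern \<sigma> j" "i \<noteq> j"
  shows "i + 1 < j \<or> j + 1 < i"
proof (rule ccontr)
  assume "\<not> (i + 1 < j \<or> j + 1 < i)"
  then have "j = Suc i \<or> i = Suc j"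
    using assms(3) by arith
  then show False
    using assms(1,2) unfolding nc_descent_pattern_def by auto
qed

lemma nc_descent_pattern_comp_sref_far:
  assumes "i + 1 < j \<or> j + 1 < i"
  shows "nc_descent_pattern (\<sigma> \<circ> sref j) i \<longleftrightarrow> nc_descent_pattern \<sigma> i"
  using assms by (auto simp: nc_descent_pattern_def)

lemma obtain_second_least:
  assumes "finite B" "y \<in> B" "y \<noteq> Min B"
  obtains t where "t \<in> B" "Min B < t" "\<And>z. z \<in> B \<Longrightarrow> Min B < z \<Longrightarrow> t \<le> z"
proof
  let ?B' = "B - {Min B}"
  have "finite ?B'" "?B' \<noteq> {}"
    using assms by auto
  then have "Min ?B' \<in> ?B'"
    by (rule Min_in)
  then show "Min ?B' \<in> B"
    by simp
  show "Min B < Min ?B'"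
    using Min_le[OF assms(1), of "Min ?B'"] \<open>Min ?B' \<in> ?B'\<close> by auto
  show "\<And>z. z \<in> B \<Longrightarrow> Min B < z \<Longrightarrow> Min ?B' \<le> z"
    using \<open>finite ?B'\<close> by simp
qed

lemma nc_descent_pattern_Min:
  assumes P: "partition_on A P" "finite A" and B: "B \<in> P" "Suc m \<in> B" "m = Min B"
  shows "nc_descent_pattern (part_perm P) m"
proof -
  have "finite B"
    using partition_on_finite_block[OF P B(1)] .
  then have "m \<in> B" "Suc m \<le> Max B"
    using B(2,3) by (auto intro: Min_in)
  moreover have "part_perm P m = Max B"
    using part_perm_block[OF P(1) B(1)] \<open>m \<in> B\<close> block_pred_Min[of B, folded B(3)] by simp
  ultimately show ?thesis
    using part_perm_Suc_same_block[OF P B(1) _ B(2)] by (simp add: nc_descent_pattern_def)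
qed

lemma nc_descent_pattern_singleton:
  assumes "partition_on A P" "{i} \<in> P" "C \<in> P" "Suc i \<in> C" "block_pred C (Suc i) < i"
  shows "nc_descent_pattern (part_perm P) i"
  using part_perm_block[OF assms(1,2), of i] part_perm_block[OF assms(1,3,4)] assms(5)
  by (simp add: nc_descent_pattern_def block_pred_def)

lemma nested_block_smaller_gap:
  assumes P: "partition_on A P" "finite A" "noncrossing P"
    and "B \<in> P" "D \<in> P" "disjnt B D" "m \<in> B" "t \<in> B" "i \<in> D" "m < i" "i < t" "D \<noteq> {i}"
  obtains t' where "t' \<in> D" "Min D < t'" "\<And>z. z \<in> D \<Longrightarrow> Min D < z \<Longrightarrow> t' \<le> z" "t' - Min D < t - m"
proof -
  have "finite D"
    using partition_on_finite_block[OF P(1,2) assms(5)] .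
  obtain y where "y \<in> D" "y \<noteq> Min D"
    using assms(9,12) by (cases "i = Min D") auto
  then obtain t' where t': "t' \<in> D" "Min D < t'" "\<And>z. z \<in> D \<Longrightarrow> Min D < z \<Longrightarrow> t' \<le> z"
    using obtain_second_least[OF \<open>finite D\<close>] by metis
  have nested: "m < z \<and> z < t" if "z \<in> D" for z
    using noncrossing_nested[OF P(3) assms(4-11) that] .
  have "Min D \<in> D"
    using \<open>finite D\<close> assms(9) by (intro Min_in) auto
  then have "t' - Min D < t - m"
    using nested[OF t'(1)] nested[OF \<open>Min D \<in> D\<close>] t'(2) by linarith
  then show ?thesis
    using t' that by blast
qed

text \<open>Induction on the gap between the two least elements of a block: unless the gap closes at
  once, the block of the element just below the second one is a singleton (giving a descent) or,
  by noncrossingness, nested inside the gap with a smaller gap of its own.\<close>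

lemma exists_nc_descent_pattern_below:
  assumes P: "partition_on {1..n} P" "noncrossing P"
  shows "B \<in> P \<Longrightarrow> t \<in> B \<Longrightarrow> Min B < t \<Longrightarrow> (\<And>z. z \<in> B \<Longrightarrow> Min B < z \<Longrightarrow> t \<le> z)
    \<Longrightarrow> \<exists>i. 1 \<le> i \<and> Suc i \<le> n \<and> nc_descent_pattern (part_perm P) i"
proof (induction "t - Min B" arbitrary: B t rule: less_induct)
  case less
  let ?m = "Min B"
  have "finite B"
    using partition_on_finite_block[OF P(1) _ less.prems(1)] by simp
  then have "?m \<in> B"
    using less.prems(2) by (intro Min_in) auto
  have "B \<subseteq> {1..n}"
    using P(1) less.prems(1) by (auto simp: partition_on_def)
  then have "1 \<le> ?m" "t \<le> n"
    using \<open>?m \<in> B\<close> less.prems(2) by auto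
  show ?case
  proof (cases "t = Suc ?m")
    case True
    then show ?thesis
      using nc_descent_pattern_Min[OF P(1) _ less.prems(1)] less.prems(2) \<open>1 \<le> ?m\<close> \<open>t \<le> n\<close>
      by (intro exI[of _ ?m]) simp
  next
    case False
    define i where "i = t - 1"
    have i: "?m < i" "Suc i = t"
      using False less.prems(3) by (auto simp: i_def)
    then have "i \<in> {1..n}"
      using \<open>1 \<le> ?m\<close> \<open>t \<le> n\<close> by auto
    then obtain D where D: "D \<in> P" "i \<in> D"
      by (rule partition_on_obtain_block[OF P(1)])
    have "i \<notin> B"
      using less.prems(4)[of i] i by linarith
    then have "disjnt B D"
      using pairwiseD[OF partition_onD2[OF P(1)] less.prems(1) D(1)] D(2) by blast
    show ?thesis
    proof (cases "D = {i}")
      case True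
      have "block_pred B t = ?m"
        using block_pred_eqI[OF \<open>finite B\<close> \<open>?m \<in> B\<close> less.prems(2,3)] less.prems(4) by simp
      then have "nc_descent_pattern (part_perm P) i"
        using nc_descent_pattern_singleton[OF P(1) _ less.prems(1)] D(1) True less.prems(2) i
        by simp
      then show ?thesis
        using \<open>i \<in> {1..n}\<close> i \<open>t \<le> n\<close> by (intro exI[of _ i]) simp
    next
      case False
      then obtain t' where t': "t' \<in> D" "Min D < t'" "\<And>z. z \<in> D \<Longrightarrow> Min D < z \<Longrightarrow> t' \<le> z"
        and "t' - Min D < t - ?m"
        using nested_block_smaller_gap[OF P(1) finite_atLeastAtMost P(2) less.prems(1) D(1)
            \<open>disjnt B D\<close> \<open>?m \<in> B\<close> less.prems(2) D(2) i(1) _ False] i(2)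
        by auto
      then show ?thesis
        using less.hyps[OF _ D(1) t'] by simp
    qed
  qed
qed

lemma NC_exists_nc_descent_pattern:
  assumes "\<sigma> \<in> NC n" "\<sigma> \<noteq> id"
  shows "\<exists>i. 1 \<le> i \<and> Suc i \<le> n \<and> nc_descent_pattern \<sigma> i"
proof -
  obtain P where P: "partition_on {1..n} P" "noncrossing P" "\<sigma> = part_perm P"
    using NC_obtain_partition[OF assms(1)] .
  have "\<exists>B\<in>P. \<exists>y\<in>B. y \<noteq> Min B"
  proof (rule ccontr)
    assume no_pair: "\<not> (\<exists>B\<in>P. \<exists>y\<in>B. y \<noteq> Min B)"
    have singleton: "B = {x}" if "B \<in> P" "x \<in> B" for B x
    proof -
      have "y = Min B" if "y \<in> B" for y
        using no_pair \<open>B \<in> P\<close> that by blast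
      then show ?thesis
        using \<open>x \<in> B\<close> by blast
    qed
    have "part_perm P = id"
    proof (rule part_perm_eqI[OF P(1)])
      fix B x
      assume "B \<in> P" "x \<in> B"
      then have "B = {x}"
        by (rule singleton)
      then show "id x = block_pred B x"
        by (simp add: block_pred_def)
    qed simp
    then show False
      using assms(2) P(3) by simp
  qed
  then obtain B y where B: "B \<in> P" "y \<in> B" "y \<noteq> Min B"
    by blast
  obtain t where "t \<in> B" "Min B < t" "\<And>z. z \<in> B \<Longrightarrow> Min B < z \<Longrightarrow> t \<le> z"
    using obtain_second_least[OF partition_on_finite_block[OF P(1) _ B(1)] B(2,3)] by auto
  then show ?thesis
    using exists_nc_descent_pattern_below[OF P(1,2) B(1)] P(3) by blast
qed

section \<open>Noncrossing reduced words\<close>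

lemma word_perm_snoc: "word_perm (u @ [i]) = word_perm u \<circ> sref i"
  by (induction u) (simp_all add: comp_assoc)

lemma comp_sref_commute:
  assumes "i + 1 < j \<or> j + 1 < i"
  shows "f \<circ> sref i \<circ> sref j = f \<circ> sref j \<circ> sref i"
  using assms by (auto simp: sref_def fun_eq_iff transpose_def)

lemma perm_len_id: "perm_len n id = 0"
proof -
  have "{(i, j). 1 \<le> i \<and> i < j \<and> j \<le> n \<and> id j < id i} = {}"
    by auto
  then show ?thesis
    unfolding perm_len_def by (metis card.empty)
qed

lemma RedNC_length: "w \<in> RedNC n \<sigma> \<Longrightarrow> length w = perm_len n \<sigma>"
  by (simp add: RedNC_def Red_def)

lemma Nil_in_RedNC_iff: "[] \<in> RedNC n \<sigma> \<longleftrightarrow> \<sigma> = id"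
  by (auto simp: RedNC_def Red_def perm_len_id)

definition nc_prefixes :: "nat \<Rightarrow> nat list \<Rightarrow> bool" where
  "nc_prefixes n w \<longleftrightarrow> (\<forall>k. 1 \<le> k \<and> k \<le> length w \<longrightarrow>
      word_perm (take k w) \<in> NC n \<and> nc_descent n (word_perm (take k w)) (w ! (k - 1)))"

lemma RedNC_eq: "RedNC n \<sigma> = {w \<in> Red n \<sigma>. nc_prefixes n w}"
  by (simp add: RedNC_def nc_prefixes_def)

lemma nc_prefixes_snoc:
  "nc_prefixes n (u @ [i]) \<longleftrightarrow>
     nc_prefixes n u \<and> word_perm (u @ [i]) \<in> NC n \<and> nc_descent n (word_perm (u @ [i])) i"
proof -
  have "take k (u @ [i]) = take k u" "(u @ [i]) ! (k - 1) = u ! (k - 1)"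
    if "1 \<le> k" "k \<le> length u" for k
  proof -
    have "k - 1 < length u"
      using that by linarith
    then show "take k (u @ [i]) = take k u" "(u @ [i]) ! (k - 1) = u ! (k - 1)"
      using that by (simp_all add: nth_append)
  qed
  then show ?thesis
    unfolding nc_prefixes_def by (auto simp: le_Suc_eq)
qed

lemma snoc_in_Red_iff:
  assumes "perm_len n (\<sigma> \<circ> sref i) + 1 = perm_len n \<sigma>"
  shows "u @ [i] \<in> Red n \<sigma> \<longleftrightarrow> 1 \<le> i \<and> Suc i \<le> n \<and> u \<in> Red n (\<sigma> \<circ> sref i)"
proof -
  have "word_perm (u @ [i]) = \<sigma> \<longleftrightarrow> word_perm u = \<sigma> \<circ> sref i"
    unfolding word_perm_snoc by (metis comp_sref_sref)
  then show ?thesis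
    using assms by (auto simp: Red_def)
qed

lemma snoc_in_RedNC_iff:
  assumes "\<sigma> \<in> NC n"
  shows "u @ [i] \<in> RedNC n \<sigma> \<longleftrightarrow>
    1 \<le> i \<and> Suc i \<le> n \<and> nc_descent_pattern \<sigma> i \<and> u \<in> RedNC n (\<sigma> \<circ> sref i)"
proof
  assume w: "u @ [i] \<in> RedNC n \<sigma>"
  then have "1 \<le> i" "Suc i \<le> n" "word_perm (u @ [i]) = \<sigma>"
    by (auto simp: RedNC_def Red_def)
  moreover have "nc_prefixes n u" "nc_descent n \<sigma> i"
    using w \<open>word_perm (u @ [i]) = \<sigma>\<close> by (simp_all add: RedNC_eq nc_prefixes_snoc)
  ultimately have "nc_descent_pattern \<sigma> i"
    using nc_descent_iff_pattern[OF assms] by blast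
  with \<open>1 \<le> i\<close> \<open>Suc i \<le> n\<close> have "u \<in> Red n (\<sigma> \<circ> sref i)"
    using w snoc_in_Red_iff[OF perm_len_comp_sref_pattern] by (simp add: RedNC_eq)
  then show "1 \<le> i \<and> Suc i \<le> n \<and> nc_descent_pattern \<sigma> i \<and> u \<in> RedNC n (\<sigma> \<circ> sref i)"
    using \<open>1 \<le> i\<close> \<open>Suc i \<le> n\<close> \<open>nc_descent_pattern \<sigma> i\<close> \<open>nc_prefixes n u\<close> by (simp add: RedNC_eq)
next
  assume "1 \<le> i \<and> Suc i \<le> n \<and> nc_descent_pattern \<sigma> i \<and> u \<in> RedNC n (\<sigma> \<circ> sref i)"
  then have i: "1 \<le> i" "Suc i \<le> n" and "nc_descent_pattern \<sigma> i" and u: "u \<in> RedNC n (\<sigma> \<circ> sref i)"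
    by auto
  then have "nc_descent n \<sigma> i"
    using nc_descent_iff_pattern[OF assms i] by simp
  moreover have "u @ [i] \<in> Red n \<sigma>"
    using snoc_in_Red_iff[OF perm_len_comp_sref_pattern[OF i \<open>nc_descent_pattern \<sigma> i\<close>]] i u
    by (simp add: RedNC_eq)
  moreover have "word_perm (u @ [i]) = \<sigma>"
    using u by (simp add: RedNC_eq Red_def word_perm_snoc)
  ultimately show "u @ [i] \<in> RedNC n \<sigma>"
    using u assms by (simp add: RedNC_eq nc_prefixes_snoc)
qed

lemma RedNC_nonempty:
  assumes "\<sigma> \<in> NC n"
  shows "RedNC n \<sigma> \<noteq> {}"
  using assms
proof (induction "perm_len n \<sigma>" arbitrary: \<sigma> rule: less_induct)
  case less
  show ?case
  proof (cases "\<sigma> = id")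
    case True
    then show ?thesis
      using Nil_in_RedNC_iff by blast
  next
    case False
    then obtain i where i: "1 \<le> i" "Suc i \<le> n" "nc_descent_pattern \<sigma> i"
      using NC_exists_nc_descent_pattern[OF less.prems] by blast
    have "perm_len n (\<sigma> \<circ> sref i) < perm_len n \<sigma>"
      using perm_len_comp_sref_pattern[OF i] by simp
    then obtain u where "u \<in> RedNC n (\<sigma> \<circ> sref i)"
      using less.hyps NC_comp_sref[OF less.prems i] by blast
    then have "u @ [i] \<in> RedNC n \<sigma>"
      using snoc_in_RedNC_iff[OF less.prems] i by blast
    then show ?thesis
      by blast
  qed
qed

lemma RedNC_swap_last:
  assumes far: "i + 1 < j \<or> j + 1 < i" and "\<sigma> \<in> NC n" "a @ [i, j] \<in> RedNC n \<sigma>"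
  shows "a @ [j, i] \<in> RedNC n \<sigma>"
proof -
  have far': "j + 1 < i \<or> i + 1 < j"
    using far by auto
  have "(a @ [i]) @ [j] \<in> RedNC n \<sigma>"
    using assms(3) by simp
  then have j: "1 \<le> j" "Suc j \<le> n" "nc_descent_pattern \<sigma> j" and "a @ [i] \<in> RedNC n (\<sigma> \<circ> sref j)"
    using snoc_in_RedNC_iff[OF assms(2)] by blast+
  then have i: "1 \<le> i" "Suc i \<le> n" "nc_descent_pattern (\<sigma> \<circ> sref j) i"
    and "a \<in> RedNC n (\<sigma> \<circ> sref j \<circ> sref i)"
    using snoc_in_RedNC_iff[OF NC_comp_sref[OF assms(2) j]] by blast+
  have "nc_descent_pattern \<sigma> i"
    using nc_descent_pattern_comp_sref_far[OF far] i(3) by simp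
  then have "\<sigma> \<circ> sref i \<in> NC n"
    using NC_comp_sref[OF assms(2) i(1,2)] by simp
  moreover have "nc_descent_pattern (\<sigma> \<circ> sref i) j"
    using nc_descent_pattern_comp_sref_far[OF far'] j(3) by simp
  moreover have "a \<in> RedNC n (\<sigma> \<circ> sref i \<circ> sref j)"
    using \<open>a \<in> RedNC n (\<sigma> \<circ> sref j \<circ> sref i)\<close> by (simp only: comp_sref_commute[OF far])
  ultimately have "a @ [j] \<in> RedNC n (\<sigma> \<circ> sref i)"
    using snoc_in_RedNC_iff j(1,2) by blast
  then have "(a @ [j]) @ [i] \<in> RedNC n \<sigma>"
    using snoc_in_RedNC_iff[OF assms(2)] i(1,2) \<open>nc_descent_pattern \<sigma> i\<close> by blast
  then show ?thesis
    by simp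
qed

lemma RedNC_comm_move:
  assumes "comm_move u v" "\<sigma> \<in> NC n" "u \<in> RedNC n \<sigma>"
  shows "v \<in> RedNC n \<sigma>"
proof -
  obtain a b i j where uv: "u = a @ [i, j] @ b" "v = a @ [j, i] @ b"
    and far: "i + 1 < j \<or> j + 1 < i"
    using assms(1) unfolding comm_move_def by blast
  have "a @ [i, j] @ b \<in> RedNC n \<sigma> \<Longrightarrow> a @ [j, i] @ b \<in> RedNC n \<sigma>" if "\<sigma> \<in> NC n" for \<sigma>
    using that
  proof (induction b arbitrary: \<sigma> rule: rev_induct)
    case Nil
    then show ?case
      using RedNC_swap_last[OF far] by simp
  next
    case (snoc k b)
    then have "(a @ [i, j] @ b) @ [k] \<in> RedNC n \<sigma>"
      by simp
    then have k: "1 \<le> k" "Suc k \<le> n" "nc_descent_pattern \<sigma> k"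
      and "a @ [i, j] @ b \<in> RedNC n (\<sigma> \<circ> sref k)"
      using snoc_in_RedNC_iff[OF snoc.prems(2)] by blast+
    then have "a @ [j, i] @ b \<in> RedNC n (\<sigma> \<circ> sref k)"
      using snoc.IH NC_comp_sref[OF snoc.prems(2) k] by blast
    then have "(a @ [j, i] @ b) @ [k] \<in> RedNC n \<sigma>"
      using snoc_in_RedNC_iff[OF snoc.prems(2)] k by blast
    then show ?case
      by simp
  qed
  then show ?thesis
    using assms(2,3) uv by simp
qed

lemma RedNC_closed_comm_moves:
  assumes "comm_move\<^sup>*\<^sup>* u v" "\<sigma> \<in> NC n" "u \<in> RedNC n \<sigma>"
  shows "v \<in> RedNC n \<sigma>"
  using assms(1,3) by induction (use RedNC_comm_move assms(2) in blast)+

lemma comm_moves_append: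
  assumes "comm_move\<^sup>*\<^sup>* u v"
  shows "comm_move\<^sup>*\<^sup>* (u @ c) (v @ c)"
  using assms
proof induction
  case (step v w)
  have "comm_move (v @ c) (w @ c)"
    using step.hyps(2) unfolding comm_move_def by fastforce
  then show ?case
    using step.IH by simp
qed simp

lemma RedNC_diamond:
  assumes "\<sigma> \<in> NC n" and i: "1 \<le> i" "Suc i \<le> n" "nc_descent_pattern \<sigma> i"
    and j: "1 \<le> j" "Suc j \<le> n" "nc_descent_pattern \<sigma> j" and "i \<noteq> j"
  obtains v where "v @ [j] \<in> RedNC n (\<sigma> \<circ> sref i)" "v @ [i] \<in> RedNC n (\<sigma> \<circ> sref j)"
    and "comm_move (v @ [j, i]) (v @ [i, j])"
proof -
  have far: "i + 1 < j \<or> j + 1 < i" and far': "j + 1 < i \<or> i + 1 < j"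
    using nc_descent_pattern_far[OF i(3) j(3) \<open>i \<noteq> j\<close>] by auto
  have NC_i: "\<sigma> \<circ> sref i \<in> NC n" and NC_j: "\<sigma> \<circ> sref j \<in> NC n"
    using NC_comp_sref[OF assms(1)] i j by blast+
  have "nc_descent_pattern (\<sigma> \<circ> sref i) j" "nc_descent_pattern (\<sigma> \<circ> sref j) i"
    using nc_descent_pattern_comp_sref_far[OF far'] nc_descent_pattern_comp_sref_far[OF far]
      i(3) j(3) by simp_all
  moreover obtain v where v: "v \<in> RedNC n (\<sigma> \<circ> sref i \<circ> sref j)"
    using RedNC_nonempty[OF NC_comp_sref[OF NC_i j(1,2)]] \<open>nc_descent_pattern (\<sigma> \<circ> sref i) j\<close>
    by blast
  moreover have "v \<in> RedNC n (\<sigma> \<circ> sref j \<circ> sref i)"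
    using v by (simp only: comp_sref_commute[OF far])
  ultimately have "v @ [j] \<in> RedNC n (\<sigma> \<circ> sref i)" "v @ [i] \<in> RedNC n (\<sigma> \<circ> sref j)"
    using snoc_in_RedNC_iff[OF NC_i] snoc_in_RedNC_iff[OF NC_j] i(1,2) j(1,2) by blast+
  moreover have "comm_move (v @ [j, i]) (v @ [i, j])"
    unfolding comm_move_def using far by (intro exI[of _ v] exI[of _ "[]"]) auto
  ultimately show ?thesis
    using that by blast
qed

lemma RedNC_connected:
  assumes "\<sigma> \<in> NC n" "u \<in> RedNC n \<sigma>" "w \<in> RedNC n \<sigma>"
  shows "comm_move\<^sup>*\<^sup>* u w"
  using assms
proof (induction "perm_len n \<sigma>" arbitrary: \<sigma> u w rule: less_induct)
  case less
  show ?case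
  proof (cases "\<sigma> = id")
    case True
    then have "u = []" "w = []"
      using RedNC_length[OF less.prems(2)] RedNC_length[OF less.prems(3)] perm_len_id by simp_all
    then show ?thesis
      by simp
  next
    case False
    then have "u \<noteq> []" "w \<noteq> []"
      using Nil_in_RedNC_iff less.prems(2,3) by blast+
    then obtain u' i w' j where uw: "u = u' @ [i]" "w = w' @ [j]"
      by (metis rev_exhaust)
    have i: "1 \<le> i" "Suc i \<le> n" "nc_descent_pattern \<sigma> i" and u': "u' \<in> RedNC n (\<sigma> \<circ> sref i)"
      using less.prems(2) snoc_in_RedNC_iff[OF less.prems(1)] uw(1) by blast+
    have j: "1 \<le> j" "Suc j \<le> n" "nc_descent_pattern \<sigma> j" and w': "w' \<in> RedNC n (\<sigma> \<circ> sref j)"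
      using less.prems(3) snoc_in_RedNC_iff[OF less.prems(1)] uw(2) by blast+
    have IH: "comm_move\<^sup>*\<^sup>* x y" if "1 \<le> k" "Suc k \<le> n" "nc_descent_pattern \<sigma> k"
      and "x \<in> RedNC n (\<sigma> \<circ> sref k)" "y \<in> RedNC n (\<sigma> \<circ> sref k)" for k x y
      using less.hyps[OF _ NC_comp_sref[OF less.prems(1) that(1-3)] that(4,5)]
        perm_len_comp_sref_pattern[OF that(1-3)] by simp
    show ?thesis
    proof (cases "i = j")
      case True
      then show ?thesis
        using comm_moves_append[OF IH[OF i u' w'[folded True]]] uw by simp
    next
      case False
      then obtain v where vj: "v @ [j] \<in> RedNC n (\<sigma> \<circ> sref i)"
        and vi: "v @ [i] \<in> RedNC n (\<sigma> \<circ> sref j)" and "comm_move (v @ [j, i]) (v @ [i, j])"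
        using RedNC_diamond[OF less.prems(1) i j] by blast
      then have "comm_move\<^sup>*\<^sup>* u (v @ [j, i])" "comm_move\<^sup>*\<^sup>* (v @ [j, i]) (v @ [i, j])"
        "comm_move\<^sup>*\<^sup>* (v @ [i, j]) w"
        using comm_moves_append[OF IH[OF i u' vj], of "[i]"]
          comm_moves_append[OF IH[OF j vi w'], of "[j]"] uw by auto
      then show ?thesis
        by (meson rtranclp_trans)
    qed
  qed
qed

theorem proposition7p12:
  fixes n :: nat and \<sigma> :: "nat \<Rightarrow> nat"
  assumes "\<sigma> \<in> NC n"
  shows "RedNC n \<sigma> \<noteq> {} \<and>
         (\<forall>w0 \<in> RedNC n \<sigma>. \<forall>w. w \<in> RedNC n \<sigma> \<longleftrightarrow> comm_move\<^sup>*\<^sup>* w0 w)"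
  using RedNC_nonempty[OF assms] RedNC_connected[OF assms] RedNC_closed_comm_moves[OF _ assms]
  by blast

end
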